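(* Let $\alpha,\mu,\gamma>0$, $\beta=\alpha+\gamma>\mu$, and consider \[ \dot L=\alpha L C-\mu L+\gamma R C,\qquad \dot R=\alpha R C-\mu R+\gamma L C,\qquad C=1-L-R. \] The interior equilibrium $E_1=(P^*,P^* )$, $P^*=\tfrac12(1-\mu/\beta)$, is locally asymptotically stable, and the eigenvalues of the Jacobian at $E_1$ are \[ \lambda_1=\mu-\beta<0,\qquad \lambda_2=-\frac{2\gamma\mu}{\beta}<0. \] When $\lambda_1\ne\lambda_2$, $E_1$ is a stable node; the eigenvalues coincide exactly on the locus $2\gamma\mu=\beta(\beta-\mu)$, where $E_1$ is a stable star. *)

theory Defs
  imports "HOL-Analysis.Analysis"
begin

definition lrc_field :: "real \<Rightarrow> real \<Rightarrow> real \<Rightarrow> real^2 \<Rightarrow> real^2" where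
  "lrc_field \<alpha> \<mu> \<gamma> z =
     (let L = z$1; R = z$2; C = 1 - L - R
      in vector [\<alpha>*L*C - \<mu>*L + \<gamma>*R*C, \<alpha>*R*C - \<mu>*R + \<gamma>*L*C])"

definition is_solution :: "(real^2 \<Rightarrow> real^2) \<Rightarrow> (real \<Rightarrow> real^2) \<Rightarrow> real set \<Rightarrow> bool" where
  "is_solution F x I \<longleftrightarrow> (\<forall>t\<in>I. (x has_vector_derivative F (x t)) (at t within I))"

definition loc_asymp_stable :: "(real^2 \<Rightarrow> real^2) \<Rightarrow> real^2 \<Rightarrow> bool" where
  "loc_asymp_stable F e \<longleftrightarrow>
     (\<forall>\<epsilon>>0. \<exists>\<delta>>0. \<forall>x T. is_solution F x {0..T} \<and> dist (x 0) e < \<delta>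
         \<longrightarrow> (\<forall>t\<in>{0..T}. dist (x t) e < \<epsilon>)) \<and>
     (\<exists>\<eta>>0. \<forall>x. is_solution F x {0..} \<and> dist (x 0) e < \<eta> \<longrightarrow> (x \<longlongrightarrow> e) at_top)"

definition eigenvalues2 :: "real^2^2 \<Rightarrow> real \<Rightarrow> real \<Rightarrow> bool" where
  "eigenvalues2 J l1 l2 \<longleftrightarrow> (\<forall>x. det (mat x - J) = (x - l1) * (x - l2))"

text \<open>Linearization classification: stable node = two distinct real negative eigenvalues;
  stable star = repeated negative eigenvalue with J = l I (two independent eigenvectors).\<close>
definition stable_node :: "real^2^2 \<Rightarrow> bool" where
  "stable_node J \<longleftrightarrow> (\<exists>l1 l2. l1 < 0 \<and> l2 < 0 \<and> l1 \<noteq> l2 \<and> eigenvalues2 J l1 l2)"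

definition stable_star :: "real^2^2 \<Rightarrow> bool" where
  "stable_star J \<longleftrightarrow> (\<exists>l<0. J = mat l)"

end

theory Submission
  imports Defs
begin

(* The Jacobian at E1 has the form [[p, q], [q, p]], with eigenvectors (1,1) and (1,-1) and
   eigenvalues p + q = mu - beta and p - q = -2 gamma mu / beta; it is a multiple of the identity
   exactly when q = 0, i.e. when the eigenvalues coincide. In the coordinates u = L + R - 2P and
   v = L - R along these eigenvectors, the inner product of z - E1 with the vector field is
   ((mu - beta) u^2 - (2 gamma mu / beta) v^2) / 2 plus a cubic remainder. Near E1 the quadratic
   part dominates, so the squared distance to E1 is a strict Lyapunov function and decays
   exponentially along solutions. *)

lemma inner_vec2: "inner (x :: real^2) y = x$1 * y$1 + x$2 * y$2"
  by (simp add: inner_vec_def sum_2)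

lemma dist_vec2_sq: "(dist (x :: real^2) y)\<^sup>2 = (x$1 - y$1)\<^sup>2 + (x$2 - y$2)\<^sup>2"
  by (simp only: dist_norm power2_norm_eq_inner) (simp add: inner_vec2 power2_eq_square)

lemma is_solution_subset: "is_solution F x I \<Longrightarrow> J \<subseteq> I \<Longrightarrow> is_solution F x J"
  unfolding is_solution_def by (auto intro: has_vector_derivative_within_subset)

lemma is_solution_continuous_on: "is_solution F x I \<Longrightarrow> continuous_on I x"
  unfolding is_solution_def by (rule continuous_on_vector_derivative) auto

lemma is_solution_has_vector_derivative_at:
  assumes "is_solution F x I" "t \<in> interior I"
  shows "(x has_vector_derivative F (x t)) (at t)"
  using assms interior_subset at_within_interior unfolding is_solution_def by (metis subsetD)

lemma has_real_derivative_dist_sq: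
  fixes x :: "real \<Rightarrow> 'a::real_inner"
  assumes "(x has_vector_derivative x') (at t)"
  shows "((\<lambda>t. (dist (x t) e)\<^sup>2) has_real_derivative 2 * inner (x t - e) x') (at t)"
proof -
  have "(x has_derivative (\<lambda>h. h *\<^sub>R x')) (at t)"
    using assms by (simp add: has_vector_derivative_def)
  then have "((\<lambda>t. inner (x t - e) (x t - e)) has_derivative
      (\<lambda>h. inner (x t - e) (h *\<^sub>R x' - 0) + inner (h *\<^sub>R x' - 0) (x t - e))) (at t)"
    by (intro derivative_intros)
  then show ?thesis
    unfolding has_field_derivative_def dist_norm power2_norm_eq_inner
    by (rule has_derivative_eq_rhs) (auto simp: inner_commute algebra_simps)
qed

lemma is_solution_stays_in_ball:
  fixes F :: "real^2 \<Rightarrow> real^2"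
  assumes inward: "\<And>z. dist z e \<le> r \<Longrightarrow> inner (z - e) (F z) \<le> 0"
    and sol: "is_solution F x {0..T}" and start: "dist (x 0) e < \<delta>" and "\<delta> \<le> r"
    and t: "t \<in> {0..T}"
  shows "dist (x t) e < \<delta>"
proof (rule ccontr)
  assume "\<not> dist (x t) e < \<delta>"
  define A where "A = {0..T} \<inter> (\<lambda>s. dist (x s) e) -` {\<delta>..}"
  have cont: "continuous_on {0..T} x" using sol by (rule is_solution_continuous_on)
  have "closed A" unfolding A_def
    by (rule continuous_closed_preimage) (auto intro!: continuous_intros cont)
  moreover have "A \<noteq> {}" using t \<open>\<not> dist (x t) e < \<delta>\<close> by (auto simp: A_def)
  moreover have bdd: "bdd_below A" by (auto simp: A_def bdd_below_def)
  ultimately have "Inf A \<in> A" by (rule closed_contains_Inf[rotated 2])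
  define t0 where "t0 = Inf A"
  have t0: "0 \<le> t0" "t0 \<le> T" "\<delta> \<le> dist (x t0) e"
    using \<open>Inf A \<in> A\<close> by (auto simp: A_def t0_def)
  with start have "0 < t0" by (cases "t0 = 0") auto
  have before: "dist (x s) e < \<delta>" if "0 \<le> s" "s < t0" for s
    using cInf_lower[OF _ bdd, of s] that t0 by (force simp: A_def t0_def)
  \<comment> \<open>Before the first time t0 at which distance \<delta> is reached, the solution lies in the ball,
    where its squared distance to e is non-increasing.\<close>
  have "(dist (x t0) e)\<^sup>2 \<le> (dist (x 0) e)\<^sup>2"
  proof (rule DERIV_nonpos_imp_decreasing_open[OF less_imp_le[OF \<open>0 < t0\<close>]])
    fix s assume s: "0 < s" "s < t0"
    then have "(x has_vector_derivative F (x s)) (at s)"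
      using t0 by (intro is_solution_has_vector_derivative_at[OF sol]) auto
    then have "((\<lambda>t. (dist (x t) e)\<^sup>2) has_real_derivative 2 * inner (x s - e) (F (x s))) (at s)"
      by (rule has_real_derivative_dist_sq)
    moreover have "inner (x s - e) (F (x s)) \<le> 0"
      using inward before[of s] s \<open>\<delta> \<le> r\<close> by auto
    ultimately show "\<exists>y. ((\<lambda>t. (dist (x t) e)\<^sup>2) has_real_derivative y) (at s) \<and> y \<le> 0"
      by auto
  next
    have "continuous_on {0..t0} x" by (rule continuous_on_subset[OF cont]) (use t0 in auto)
    then show "continuous_on {0..t0} (\<lambda>t. (dist (x t) e)\<^sup>2)" by (intro continuous_intros)
  qed
  then show False using start t0 by (simp add: abs_le_square_iff[symmetric])
qed

lemma is_solution_sq_dist_exp_bound: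
  fixes F :: "real^2 \<Rightarrow> real^2"
  assumes contract: "\<And>z. dist z e \<le> r \<Longrightarrow> inner (z - e) (F z) \<le> - c * (dist z e)\<^sup>2"
    and "c \<ge> 0" and sol: "is_solution F x {0..T}" and start: "dist (x 0) e < r" and t: "t \<in> {0..T}"
  shows "(dist (x t) e)\<^sup>2 \<le> (dist (x 0) e)\<^sup>2 * exp (- 2 * c * t)"
proof -
  have inward: "inner (z - e) (F z) \<le> 0" if "dist z e \<le> r" for z
  proof -
    have "0 \<le> c * (dist z e)\<^sup>2" using \<open>c \<ge> 0\<close> by simp
    then show ?thesis using contract[OF that] by linarith
  qed
  have "0 \<le> t" using t by simp
  let ?g = "\<lambda>s. exp (2 * c * s) * (dist (x s) e)\<^sup>2"
  have "?g t \<le> ?g 0"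
  proof (rule DERIV_nonpos_imp_decreasing_open[OF \<open>0 \<le> t\<close>])
    fix s assume s: "0 < s" "s < t"
    then have "(x has_vector_derivative F (x s)) (at s)"
      using t by (intro is_solution_has_vector_derivative_at[OF sol]) auto
    then have "((\<lambda>t. (dist (x t) e)\<^sup>2) has_real_derivative 2 * inner (x s - e) (F (x s))) (at s)"
      by (rule has_real_derivative_dist_sq)
    then have "(?g has_real_derivative
        exp (2 * c * s) * (2 * c) * (dist (x s) e)\<^sup>2 + 2 * inner (x s - e) (F (x s)) * exp (2 * c * s))
        (at s)"
      by (intro DERIV_mult) (auto intro!: derivative_eq_intros)
    moreover have "dist (x s) e < r"
      using is_solution_stays_in_ball[OF inward sol start order_refl] s t by simp
    then have "c * (dist (x s) e)\<^sup>2 + inner (x s - e) (F (x s)) \<le> 0"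
      using contract[of "x s"] by simp
    then have "2 * exp (2 * c * s) * (c * (dist (x s) e)\<^sup>2 + inner (x s - e) (F (x s))) \<le> 0"
      by (intro mult_nonneg_nonpos) auto
    then have "exp (2 * c * s) * (2 * c) * (dist (x s) e)\<^sup>2
        + 2 * inner (x s - e) (F (x s)) * exp (2 * c * s) \<le> 0"
      by (simp add: algebra_simps)
    ultimately show "\<exists>y. (?g has_real_derivative y) (at s) \<and> y \<le> 0" by blast
  next
    have "continuous_on {0..t} x"
      by (rule continuous_on_subset[OF is_solution_continuous_on[OF sol]]) (use t in auto)
    then show "continuous_on {0..t} ?g" by (intro continuous_intros)
  qed
  then show ?thesis by (simp add: exp_minus divide_inverse[symmetric] pos_le_divide_eq mult.commute)
qed

lemma is_solution_dist_le_initial: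
  fixes F :: "real^2 \<Rightarrow> real^2"
  assumes contract: "\<And>z. dist z e \<le> r \<Longrightarrow> inner (z - e) (F z) \<le> - c * (dist z e)\<^sup>2"
    and "c \<ge> 0" and sol: "is_solution F x {0..T}" and start: "dist (x 0) e < r" and t: "t \<in> {0..T}"
  shows "dist (x t) e \<le> dist (x 0) e"
proof -
  have "(dist (x t) e)\<^sup>2 \<le> (dist (x 0) e)\<^sup>2 * exp (- 2 * c * t)"
    by (rule is_solution_sq_dist_exp_bound[OF contract \<open>c \<ge> 0\<close> sol start t])
  also have "\<dots> \<le> (dist (x 0) e)\<^sup>2" using \<open>c \<ge> 0\<close> t by (simp add: mult_left_le)
  finally show ?thesis by (simp add: abs_le_square_iff[symmetric])
qed

lemma is_solution_tendsto_if_contracting: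
  fixes F :: "real^2 \<Rightarrow> real^2"
  assumes contract: "\<And>z. dist z e \<le> r \<Longrightarrow> inner (z - e) (F z) \<le> - c * (dist z e)\<^sup>2"
    and "c > 0" and sol: "is_solution F x {0..}" and start: "dist (x 0) e < r"
  shows "(x \<longlongrightarrow> e) at_top"
proof -
  have "filterlim (\<lambda>t. - 2 * c * t) at_bot at_top"
    using \<open>c > 0\<close> by (intro filterlim_tendsto_neg_mult_at_bot[OF tendsto_const _ filterlim_ident]) auto
  then have lim: "((\<lambda>t. (dist (x 0) e)\<^sup>2 * exp (- 2 * c * t)) \<longlongrightarrow> 0) at_top"
    by (intro tendsto_mult_right_zero filterlim_compose[OF exp_at_bot])
  have "(dist (x t) e)\<^sup>2 \<le> (dist (x 0) e)\<^sup>2 * exp (- 2 * c * t)" if "t \<ge> 0" for t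
    using is_solution_sq_dist_exp_bound[OF contract _ is_solution_subset[OF sol] start, of t t] \<open>c > 0\<close> that
    by auto
  then have bound: "\<forall>\<^sub>F t in at_top. (dist (x t) e)\<^sup>2 \<le> (dist (x 0) e)\<^sup>2 * exp (- 2 * c * t)"
    using eventually_ge_at_top[of "0::real"] by (rule eventually_mono[rotated])
  have "((\<lambda>t. (dist (x t) e)\<^sup>2) \<longlongrightarrow> 0) at_top"
    by (rule tendsto_sandwich[OF always_eventually bound tendsto_const lim]) simp
  then have "((\<lambda>t. sqrt ((dist (x t) e)\<^sup>2)) \<longlongrightarrow> sqrt 0) at_top"
    by (rule tendsto_real_sqrt)
  then have "((\<lambda>t. dist (x t) e) \<longlongrightarrow> 0) at_top"
    by simp
  then show ?thesis
    by (rule tendsto_dist_iff[THEN iffD2])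
qed

lemma loc_asymp_stable_if_contracting:
  fixes F :: "real^2 \<Rightarrow> real^2"
  assumes "r > 0" "c > 0"
    and contract: "\<And>z. dist z e \<le> r \<Longrightarrow> inner (z - e) (F z) \<le> - c * (dist z e)\<^sup>2"
  shows "loc_asymp_stable F e"
  unfolding loc_asymp_stable_def
proof (intro conjI allI impI)
  fix \<epsilon> :: real assume "\<epsilon> > 0"
  show "\<exists>\<delta>>0. \<forall>x T. is_solution F x {0..T} \<and> dist (x 0) e < \<delta> \<longrightarrow> (\<forall>t\<in>{0..T}. dist (x t) e < \<epsilon>)"
  proof (intro exI[of _ "min \<epsilon> r"] conjI allI impI ballI)
    fix x T t assume "is_solution F x {0..T} \<and> dist (x 0) e < min \<epsilon> r" "t \<in> {0..T}"
    then show "dist (x t) e < \<epsilon>"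
      using is_solution_dist_le_initial[OF contract less_imp_le[OF \<open>c > 0\<close>], where x = x and T = T and t = t]
      by fastforce
  qed (use \<open>\<epsilon> > 0\<close> \<open>r > 0\<close> in simp)
next
  show "\<exists>\<eta>>0. \<forall>x. is_solution F x {0..} \<and> dist (x 0) e < \<eta> \<longrightarrow> (x \<longlongrightarrow> e) at_top"
  proof (intro exI[of _ r] conjI allI impI)
    fix x assume "is_solution F x {0..} \<and> dist (x 0) e < r"
    then show "(x \<longlongrightarrow> e) at_top"
      using is_solution_tendsto_if_contracting[OF contract \<open>c > 0\<close>, where x = x] by simp
  qed (rule \<open>r > 0\<close>)
qed

lemma has_derivative_vecI:
  fixes f :: "'a::real_normed_vector \<Rightarrow> real^'n"
  assumes "\<And>i. ((\<lambda>x. f x $ i) has_derivative (\<lambda>h. f' h $ i)) (at a within S)"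
  shows "(f has_derivative f') (at a within S)"
proof (rule has_derivative_componentwise_within[THEN iffD2, rule_format])
  fix b :: "real^'n" assume "b \<in> Basis"
  then obtain i where "b = axis i 1" unfolding Basis_vec_def Basis_real_def by blast
  then show "((\<lambda>x. f x \<bullet> b) has_derivative (\<lambda>h. f' h \<bullet> b)) (at a within S)"
    using assms[of i] by (simp add: inner_axis)
qed

lemmas has_derivative_vec_nth [derivative_intros] =
  bounded_linear_imp_has_derivative[OF bounded_linear_vec_nth]

definition lrc_jacobian :: "real \<Rightarrow> real \<Rightarrow> real \<Rightarrow> real^2 \<Rightarrow> real^2^2" where
  "lrc_jacobian \<alpha> \<mu> \<gamma> z =
     (let L = z$1; R = z$2; C = 1 - L - R
      in vector [vector [\<alpha>*C - \<alpha>*L - \<mu> - \<gamma>*R, \<gamma>*C - \<alpha>*L - \<gamma>*R],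
                 vector [\<gamma>*C - \<alpha>*R - \<gamma>*L, \<alpha>*C - \<alpha>*R - \<mu> - \<gamma>*L]])"

lemma lrc_field_components:
  "lrc_field \<alpha> \<mu> \<gamma> z $ 1 = \<alpha>*z$1*(1 - z$1 - z$2) - \<mu>*z$1 + \<gamma>*z$2*(1 - z$1 - z$2)"
  "lrc_field \<alpha> \<mu> \<gamma> z $ 2 = \<alpha>*z$2*(1 - z$1 - z$2) - \<mu>*z$2 + \<gamma>*z$1*(1 - z$1 - z$2)"
  by (simp_all add: lrc_field_def Let_def)

lemma lrc_field_has_derivative:
  "(lrc_field \<alpha> \<mu> \<gamma> has_derivative (\<lambda>h. lrc_jacobian \<alpha> \<mu> \<gamma> z *v h)) (at z)"
proof (rule has_derivative_vecI)
  fix i :: 2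
  have "((\<lambda>z. lrc_field \<alpha> \<mu> \<gamma> z $ 1) has_derivative (\<lambda>h. (lrc_jacobian \<alpha> \<mu> \<gamma> z *v h) $ 1)) (at z)"
    and "((\<lambda>z. lrc_field \<alpha> \<mu> \<gamma> z $ 2) has_derivative (\<lambda>h. (lrc_jacobian \<alpha> \<mu> \<gamma> z *v h) $ 2)) (at z)"
    unfolding lrc_field_components
    by (rule has_derivative_eq_rhs, (rule derivative_eq_intros refl)+, rule ext,
        simp add: lrc_jacobian_def Let_def matrix_vector_mul_component inner_vec2 algebra_simps)+
  then show "((\<lambda>z. lrc_field \<alpha> \<mu> \<gamma> z $ i) has_derivative (\<lambda>h. (lrc_jacobian \<alpha> \<mu> \<gamma> z *v h) $ i)) (at z)"
    using exhaust_2[of i] by (elim disjE) simp_all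
qed

lemma jacobian_lrc_field: "jacobian (lrc_field \<alpha> \<mu> \<gamma>) (at z) = lrc_jacobian \<alpha> \<mu> \<gamma> z"
  unfolding jacobian_def frechet_derivative_at[OF lrc_field_has_derivative, symmetric] by simp

lemma eigenvalues2_symmetric:
  "eigenvalues2 (vector [vector [(a + b) / 2, (a - b) / 2], vector [(a - b) / 2, (a + b) / 2]]) a b"
  unfolding eigenvalues2_def by (simp add: det_2 mat_def field_simps)

lemma lrc_field_equilibrium:
  assumes "\<beta> = \<alpha> + \<gamma>" "\<beta> \<noteq> 0" "P = (1 - \<mu> / \<beta>) / 2"
  shows "lrc_field \<alpha> \<mu> \<gamma> (vector [P, P]) = 0"
proof -
  have \<mu>: "\<mu> = \<beta> * (1 - 2 * P)" using assms(2,3) by (simp add: field_simps)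
  show ?thesis
    unfolding \<mu> assms(1) by (simp add: vec_eq_iff forall_2 lrc_field_components algebra_simps)
qed

lemma lrc_jacobian_equilibrium:
  assumes "\<beta> = \<alpha> + \<gamma>" "\<beta> \<noteq> 0" "P = (1 - \<mu> / \<beta>) / 2"
  defines "l1 \<equiv> \<mu> - \<beta>" and "l2 \<equiv> - 2 * \<gamma> * \<mu> / \<beta>"
  shows "lrc_jacobian \<alpha> \<mu> \<gamma> (vector [P, P]) =
    vector [vector [(l1 + l2) / 2, (l1 - l2) / 2], vector [(l1 - l2) / 2, (l1 + l2) / 2]]"
proof -
  have \<mu>: "\<mu> = \<beta> * (1 - 2 * P)" using assms(2,3) by (simp add: field_simps)
  have l2: "l2 = - 2 * \<gamma> * (1 - 2 * P)" unfolding l2_def \<mu> using assms(2) by simp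
  show ?thesis
    unfolding l1_def l2 \<mu> assms(1) by (simp add: lrc_jacobian_def Let_def vec_eq_iff forall_2 algebra_simps)
qed

lemma lrc_field_contracting:
  fixes \<alpha> \<mu> \<gamma> \<beta> P c :: real and z :: "real^2"
  assumes "\<alpha> \<ge> 0" "\<gamma> \<ge> 0" "\<beta> = \<alpha> + \<gamma>" "\<beta> > 0" "P = (1 - \<mu> / \<beta>) / 2"
    and "c \<le> \<beta> - \<mu>" "c \<le> 2 * \<gamma> * \<mu> / \<beta>"
    and near: "dist z (vector [P, P]) \<le> c / (4 * \<beta>)"
  shows "inner (z - vector [P, P]) (lrc_field \<alpha> \<mu> \<gamma> z) \<le> - (c / 2) * (dist z (vector [P, P]))\<^sup>2"
proof -
  define u where "u = z$1 + z$2 - 2 * P"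
  define v where "v = z$1 - z$2"
  define d where "d = dist z (vector [P, P])"
  have \<mu>: "\<mu> = \<beta> * (1 - 2 * P)" using assms(4,5) by (simp add: field_simps)
  have d2: "d\<^sup>2 = (u\<^sup>2 + v\<^sup>2) / 2"
    unfolding d_def u_def v_def dist_vec2_sq by (simp add: power2_eq_square algebra_simps)
  have expand: "inner (z - vector [P, P]) (lrc_field \<alpha> \<mu> \<gamma> z)
      = ((\<mu> - \<beta>) * u\<^sup>2 - (2 * \<gamma> * \<mu> / \<beta>) * v\<^sup>2) / 2 - u * (\<beta> * u\<^sup>2 + (\<alpha> - \<gamma>) * v\<^sup>2) / 2"
  proof -
    have l2: "2 * \<gamma> * \<mu> / \<beta> = 2 * \<gamma> * (1 - 2 * P)" using \<mu> assms(4) by simp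
    show ?thesis
      unfolding l2 unfolding u_def v_def \<mu> assms(3)
      by (simp add: inner_vec2 lrc_field_components power2_eq_square field_simps)
  qed
  have linear_part: "((\<mu> - \<beta>) * u\<^sup>2 - (2 * \<gamma> * \<mu> / \<beta>) * v\<^sup>2) / 2 \<le> - c * d\<^sup>2"
  proof -
    have "c * u\<^sup>2 \<le> (\<beta> - \<mu>) * u\<^sup>2" "c * v\<^sup>2 \<le> (2 * \<gamma> * \<mu> / \<beta>) * v\<^sup>2"
      using mult_right_mono[OF assms(6), of "u\<^sup>2"] mult_right_mono[OF assms(7), of "v\<^sup>2"] by simp_all
    moreover have "- c * d\<^sup>2 = - (c * u\<^sup>2 + c * v\<^sup>2) / 2" by (simp add: d2 algebra_simps)
    ultimately show ?thesis by (simp add: algebra_simps)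
  qed
  have "u\<^sup>2 \<le> 4 * d\<^sup>2" unfolding d2 by (simp add: add_increasing)
  then have "\<bar>u\<bar>\<^sup>2 \<le> (2 * d)\<^sup>2" by (simp add: power_mult_distrib)
  then have "\<bar>u\<bar> \<le> 2 * d" by (rule power2_le_imp_le) (simp add: d_def)
  then have "\<beta> * \<bar>u\<bar> \<le> \<beta> * (2 * d)" using assms(4) by simp
  also have "\<dots> \<le> c / 2" using near assms(4) by (simp add: d_def field_simps)
  finally have u_small: "\<beta> * \<bar>u\<bar> \<le> c / 2" .
  have "\<bar>\<beta> * u\<^sup>2 + (\<alpha> - \<gamma>) * v\<^sup>2\<bar> \<le> \<beta> * (u\<^sup>2 + v\<^sup>2)"
  proof -
    have "\<bar>(\<alpha> - \<gamma>) * v\<^sup>2\<bar> \<le> \<beta> * v\<^sup>2"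
      using assms(1-3) by (simp add: abs_mult mult_right_mono)
    then show ?thesis
      using abs_triangle_ineq[of "\<beta> * u\<^sup>2" "(\<alpha> - \<gamma>) * v\<^sup>2"] assms(4)
      by (simp add: abs_mult distrib_left)
  qed
  then have "\<bar>u * (\<beta> * u\<^sup>2 + (\<alpha> - \<gamma>) * v\<^sup>2)\<bar> \<le> \<bar>u\<bar> * (\<beta> * (u\<^sup>2 + v\<^sup>2))"
    by (simp add: abs_mult mult_left_mono)
  also have "\<dots> = (\<beta> * \<bar>u\<bar>) * (2 * d\<^sup>2)" by (simp add: d2)
  also have "\<dots> \<le> (c / 2) * (2 * d\<^sup>2)" using u_small by (intro mult_right_mono) auto
  finally have cubic_part: "\<bar>u * (\<beta> * u\<^sup>2 + (\<alpha> - \<gamma>) * v\<^sup>2) / 2\<bar> \<le> (c / 2) * d\<^sup>2" by simp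
  show ?thesis
    using expand linear_part cubic_part unfolding d_def by linarith
qed

lemma loc_asymp_stable_lrc_equilibrium:
  assumes "\<alpha> > 0" "\<mu> > 0" "\<gamma> > 0" "\<beta> = \<alpha> + \<gamma>" "\<beta> > \<mu>" "P = (1 - \<mu> / \<beta>) / 2"
  shows "loc_asymp_stable (lrc_field \<alpha> \<mu> \<gamma>) (vector [P, P])"
proof -
  have "\<beta> > 0" using assms(1,3,4) by simp
  define c where "c = min (\<beta> - \<mu>) (2 * \<gamma> * \<mu> / \<beta>)"
  have "c > 0" using assms(2,3,5) \<open>\<beta> > 0\<close> by (simp add: c_def)
  have c_le: "c \<le> \<beta> - \<mu>" "c \<le> 2 * \<gamma> * \<mu> / \<beta>" by (simp_all add: c_def)
  show ?thesis
  proof (rule loc_asymp_stable_if_contracting)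
    fix z :: "real^2" assume "dist z (vector [P, P]) \<le> c / (4 * \<beta>)"
    then show "inner (z - vector [P, P]) (lrc_field \<alpha> \<mu> \<gamma> z) \<le> - (c / 2) * (dist z (vector [P, P]))\<^sup>2"
      by (rule lrc_field_contracting[OF less_imp_le[OF assms(1)] less_imp_le[OF assms(3)]
            assms(4) \<open>\<beta> > 0\<close> assms(6) c_le])
  qed (use \<open>c > 0\<close> \<open>\<beta> > 0\<close> in auto)
qed

theorem theorem3p8:
  fixes \<alpha> \<mu> \<gamma> \<beta> P :: real and E1 :: "real^2" and J :: "real^2^2"
  assumes "\<alpha> > 0" "\<mu> > 0" "\<gamma> > 0"
    and "\<beta> = \<alpha> + \<gamma>" "\<beta> > \<mu>"
    and "P = (1 - \<mu> / \<beta>) / 2"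
    and "E1 = vector [P, P]"
    and "J = jacobian (lrc_field \<alpha> \<mu> \<gamma>) (at E1)"
  shows "lrc_field \<alpha> \<mu> \<gamma> E1 = 0 \<and> 0 < P \<and> 0 < 1 - 2 * P
    \<and> loc_asymp_stable (lrc_field \<alpha> \<mu> \<gamma>) E1
    \<and> eigenvalues2 J (\<mu> - \<beta>) (- 2 * \<gamma> * \<mu> / \<beta>)
    \<and> \<mu> - \<beta> < 0 \<and> - 2 * \<gamma> * \<mu> / \<beta> < 0
    \<and> (\<mu> - \<beta> \<noteq> - 2 * \<gamma> * \<mu> / \<beta> \<longrightarrow> stable_node J)
    \<and> (\<mu> - \<beta> = - 2 * \<gamma> * \<mu> / \<beta> \<longleftrightarrow> 2 * \<gamma> * \<mu> = \<beta> * (\<beta> - \<mu>))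
    \<and> (\<mu> - \<beta> = - 2 * \<gamma> * \<mu> / \<beta> \<longrightarrow> stable_star J)"
proof -
  let ?l1 = "\<mu> - \<beta>" and ?l2 = "- 2 * \<gamma> * \<mu> / \<beta>"
  have "\<beta> > 0" using assms(1,3,4) by simp
  have l1_neg: "?l1 < 0" and l2_neg: "?l2 < 0" using assms(2,3,5) \<open>\<beta> > 0\<close> by simp_all
  have P_pos: "0 < P" and "0 < 1 - 2 * P"
    using assms(2,5) \<open>\<beta> > 0\<close> unfolding assms(6) by (simp_all add: field_simps)
  have equilibrium: "lrc_field \<alpha> \<mu> \<gamma> E1 = 0"
    unfolding assms(7) using lrc_field_equilibrium[OF assms(4) _ assms(6)] \<open>\<beta> > 0\<close> by simp
  have J: "J = vector [vector [(?l1 + ?l2) / 2, (?l1 - ?l2) / 2], vector [(?l1 - ?l2) / 2, (?l1 + ?l2) / 2]]"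
    unfolding assms(7,8) jacobian_lrc_field
    using lrc_jacobian_equilibrium[OF assms(4) _ assms(6)] \<open>\<beta> > 0\<close> by simp
  have eigenvalues: "eigenvalues2 J ?l1 ?l2"
    unfolding J by (rule eigenvalues2_symmetric)
  have node: "?l1 \<noteq> ?l2 \<longrightarrow> stable_node J"
    using l1_neg l2_neg eigenvalues unfolding stable_node_def by blast
  have star: "?l1 = ?l2 \<longrightarrow> stable_star J"
    using l1_neg unfolding stable_star_def J by (auto simp: vec_eq_iff forall_2 mat_def)
  have coincidence: "?l1 = ?l2 \<longleftrightarrow> 2 * \<gamma> * \<mu> = \<beta> * (\<beta> - \<mu>)"
    using \<open>\<beta> > 0\<close> by (auto simp: field_simps)
  have stable: "loc_asymp_stable (lrc_field \<alpha> \<mu> \<gamma>) E1"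
    unfolding assms(7) by (rule loc_asymp_stable_lrc_equilibrium[OF assms(1-6)])
  show ?thesis
    using equilibrium P_pos \<open>0 < 1 - 2 * P\<close> stable eigenvalues l1_neg l2_neg node coincidence star
    by blast
qed

end
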